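(* Let $L>0$, let $a$ satisfy (H_a), $l\in L^2(0,L)$, and let $\phi$ satisfy (H_φ) with $\phi(0)=+\infty$. Let $w\in H^1(0,L)$ with $\phi(w)\in L^2(0,L)$ satisfy $a(x)\frac{dw}{dx}=\phi(w)+l$ in $\mathcal D'(0,L)$. Let $0\le A<B\le L$, $x_0\in[A,B]$ with $w(x_0)=0$, and assume there is $M>0$ with $l(x)\ge -M$ for a.e. $x\in[A,B]$. Then for every $k>0$ there exists $\delta>0$ such that: $\frac{dw}{dx}\ge k$ a.e. in $[x_0-\delta,x_0+\delta]\cap[A,B]$; $w(x)\ge k(x-x_0)$ for all $x\in[x_0,x_0+\delta]\cap[A,B]$; and $w(x)\le k(x-x_0)$ for all $x\in[x_0-\delta,x_0]\cap[A,B]$.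
   Context: (H_a): $a\in L^\infty(0,L)$ and there are constants $0<\alpha<\beta$ with $\alpha\le a(x)\le\beta$ for a.e. $x\in(0,L)$. (H_φ): $\phi:\mathbb{R}\to\mathbb{R}\cup\{+\infty\}$ is continuous when $\mathbb{R}\cup\{+\infty\}$ carries its usual topology, and $\phi(s)<+\infty$ for every $s\neq0$. Functions in $H^1(0,L)$ are identified with their continuous representatives. *)

theory Defs
  imports "HOL-Analysis.Analysis"
begin

definition test_fun :: "real \<Rightarrow> (real \<Rightarrow> real) \<Rightarrow> bool" where
  "test_fun L \<psi> \<longleftrightarrow>
     (\<forall>n x. ((deriv ^^ n) \<psi>) differentiable (at x)) \<and>
     (\<exists>c d. 0 < c \<and> c \<le> d \<and> d < L \<and> (\<forall>x. x \<notin> {c..d} \<longrightarrow> \<psi> x = 0))"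

definition L2_on :: "real \<Rightarrow> (real \<Rightarrow> real) \<Rightarrow> bool" where
  "L2_on L f \<longleftrightarrow> f \<in> borel_measurable (lebesgue_on {0<..<L}) \<and>
     integrable (lebesgue_on {0<..<L}) (\<lambda>x. (f x)\<^sup>2)"

definition weak_deriv_on :: "real \<Rightarrow> (real \<Rightarrow> real) \<Rightarrow> (real \<Rightarrow> real) \<Rightarrow> bool" where
  "weak_deriv_on L w g \<longleftrightarrow>
     (\<forall>\<psi>. test_fun L \<psi> \<longrightarrow>
        integral\<^sup>L (lebesgue_on {0<..<L}) (\<lambda>x. w x * deriv \<psi> x)
        = - integral\<^sup>L (lebesgue_on {0<..<L}) (\<lambda>x. g x * \<psi> x))"

text \<open>w in H^1(0,L) with weak derivative g (w identified with its continuous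
representative on [0,L]).\<close>
definition H1_with_deriv :: "real \<Rightarrow> (real \<Rightarrow> real) \<Rightarrow> (real \<Rightarrow> real) \<Rightarrow> bool" where
  "H1_with_deriv L w g \<longleftrightarrow> continuous_on {0..L} w \<and> L2_on L w \<and> L2_on L g \<and>
     weak_deriv_on L w g"

definition distr_eq_on :: "real \<Rightarrow> (real \<Rightarrow> real) \<Rightarrow> (real \<Rightarrow> real) \<Rightarrow> bool" where
  "distr_eq_on L f h \<longleftrightarrow>
     (\<forall>\<psi>. test_fun L \<psi> \<longrightarrow>
        integral\<^sup>L (lebesgue_on {0<..<L}) (\<lambda>x. f x * \<psi> x)
        = integral\<^sup>L (lebesgue_on {0<..<L}) (\<lambda>x. h x * \<psi> x))"

end

theory Submission
  imports Defs "HOL-Computational_Algebra.Polynomial"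
begin

text \<open>Testing the equation against smooth approximations of indicators of intervals shows that
  \<open>a w' = \<phi>(w) + l\<close> holds a.e. and that \<open>w d - w c\<close> is the integral of \<open>w'\<close> over \<open>(c, d]\<close>.
  Near \<open>x0\<close> the function \<open>w\<close> is small by continuity, and a.e. nonzero because \<open>\<phi>(w)\<close> is
  finite a.e.; as \<open>\<phi>\<close> tends to \<open>+\<infinity>\<close> at \<open>0\<close>, there \<open>\<phi>(w) > \<beta> k + M\<close>, so
  \<open>a w' > \<beta> k\<close> and hence \<open>w' \<ge> k\<close> a.e. Integrating \<open>w'\<close> from \<open>x0\<close> gives the two
  linear bounds on \<open>w\<close>.\<close>

section \<open>Functions with many derivatives\<close>

definition smooth_upto :: "nat \<Rightarrow> (real \<Rightarrow> real) \<Rightarrow> bool" where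
  "smooth_upto n f \<longleftrightarrow> (\<forall>m\<le>n. \<forall>x. (deriv ^^ m) f differentiable (at x))"

lemma smooth_upto_0: "smooth_upto 0 f \<longleftrightarrow> (\<forall>x. f differentiable (at x))"
  by (simp add: smooth_upto_def)

lemma smooth_upto_Suc:
  "smooth_upto (Suc n) f \<longleftrightarrow> (\<forall>x. f differentiable (at x)) \<and> smooth_upto n (deriv f)"
proof -
  have funpow_deriv: "(deriv ^^ Suc m) f = (deriv ^^ m) (deriv f)" for m
    by (simp add: funpow_Suc_right del: funpow.simps)
  show ?thesis
    unfolding smooth_upto_def
  proof safe
    fix m x assume "\<forall>m\<le>Suc n. \<forall>x. (deriv ^^ m) f differentiable at x" "m \<le> n"
    then show "(deriv ^^ m) (deriv f) differentiable at x"
      using funpow_deriv[of m] by (metis Suc_le_mono)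
  next
    fix x assume "\<forall>m\<le>Suc n. \<forall>x. (deriv ^^ m) f differentiable at x"
    then show "f differentiable at x" by (metis funpow_0 le0)
  next
    fix m x
    assume hyps: "\<forall>x. f differentiable at x"
      "\<forall>m\<le>n. \<forall>x. (deriv ^^ m) (deriv f) differentiable at x" "m \<le> Suc n"
    show "(deriv ^^ m) f differentiable at x"
    proof (cases m)
      case (Suc k) then show ?thesis using hyps funpow_deriv[of k] by auto
    qed (use hyps in simp)
  qed
qed

lemma smooth_upto_SucD: "smooth_upto (Suc n) f \<Longrightarrow> smooth_upto n f"
  by (simp add: smooth_upto_def)

lemma smooth_upto_imp_differentiable: "smooth_upto n f \<Longrightarrow> \<forall>x. f differentiable (at x)"
  by (auto simp: smooth_upto_def)

lemma DERIV_deriv_everywhere: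
  "\<forall>x. f differentiable (at x) \<Longrightarrow> (f has_real_derivative deriv f x) (at x)"
  by (simp add: DERIV_deriv_iff_real_differentiable)

lemma smooth_upto_const: "smooth_upto n (\<lambda>x. c)"
proof (induction n arbitrary: c)
  case (Suc n)
  have "deriv (\<lambda>x. c) = (\<lambda>x. 0)" by (rule ext) simp
  with Suc show ?case by (simp add: smooth_upto_Suc)
qed (simp add: smooth_upto_0)

lemma smooth_upto_add:
  "smooth_upto n f \<Longrightarrow> smooth_upto n g \<Longrightarrow> smooth_upto n (\<lambda>x. f x + g x)"
proof (induction n arbitrary: f g)
  case 0 then show ?case by (auto simp: smooth_upto_0 intro: differentiable_add)
next
  case (Suc n)
  have df: "\<forall>x. f differentiable (at x)" and dg: "\<forall>x. g differentiable (at x)"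
    using Suc.prems smooth_upto_imp_differentiable by blast+
  have "deriv (\<lambda>x. f x + g x) = (\<lambda>x. deriv f x + deriv g x)"
    by (rule ext, rule DERIV_imp_deriv,
        rule DERIV_add[OF DERIV_deriv_everywhere[OF df] DERIV_deriv_everywhere[OF dg]])
  then show ?case using Suc df dg by (auto simp: smooth_upto_Suc intro: differentiable_add)
qed

lemma smooth_upto_mult:
  "smooth_upto n f \<Longrightarrow> smooth_upto n g \<Longrightarrow> smooth_upto n (\<lambda>x. f x * g x)"
proof (induction n arbitrary: f g)
  case 0 then show ?case by (auto simp: smooth_upto_0 intro: differentiable_mult)
next
  case (Suc n)
  have df: "\<forall>x. f differentiable (at x)" and dg: "\<forall>x. g differentiable (at x)"
    using Suc.prems smooth_upto_imp_differentiable by blast+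
  have "deriv (\<lambda>x. f x * g x) = (\<lambda>x. deriv f x * g x + f x * deriv g x)"
    by (rule ext, rule DERIV_imp_deriv)
       (use DERIV_deriv_everywhere[OF df] DERIV_deriv_everywhere[OF dg]
         in \<open>auto intro!: derivative_eq_intros\<close>)
  moreover have "smooth_upto n (\<lambda>x. deriv f x * g x + f x * deriv g x)"
  proof -
    have "smooth_upto n f" "smooth_upto n g"
      using Suc.prems smooth_upto_SucD by blast+
    moreover have "smooth_upto n (deriv f)" "smooth_upto n (deriv g)"
      using Suc.prems by (auto simp: smooth_upto_Suc)
    ultimately show ?thesis
      by (intro smooth_upto_add Suc.IH)
  qed
  ultimately show ?case
    using df dg by (simp add: smooth_upto_Suc differentiable_mult)
qed

lemma smooth_upto_diff:
  assumes "smooth_upto n f" "smooth_upto n g"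
  shows "smooth_upto n (\<lambda>x. f x - g x)"
proof -
  have "smooth_upto n (\<lambda>x. -1 * g x)"
    using smooth_upto_mult[OF smooth_upto_const assms(2)] .
  from smooth_upto_add[OF assms(1) this] show ?thesis by simp
qed

lemma smooth_upto_divide:
  "smooth_upto n f \<Longrightarrow> smooth_upto n g \<Longrightarrow> \<forall>x. g x \<noteq> 0 \<Longrightarrow>
    smooth_upto n (\<lambda>x. f x / g x)"
proof (induction n arbitrary: f g)
  case 0 then show ?case by (auto simp: smooth_upto_0 intro: differentiable_divide)
next
  case (Suc n)
  have df: "\<forall>x. f differentiable (at x)" and dg: "\<forall>x. g differentiable (at x)"
    using Suc.prems smooth_upto_imp_differentiable by blast+
  have "deriv (\<lambda>x. f x / g x) = (\<lambda>x. (deriv f x * g x - f x * deriv g x) / (g x * g x))"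
    by (rule ext, rule DERIV_imp_deriv)
       (use DERIV_deriv_everywhere[OF df] DERIV_deriv_everywhere[OF dg] Suc.prems
         in \<open>auto intro!: derivative_eq_intros simp: power2_eq_square field_simps\<close>)
  moreover have "smooth_upto n (\<lambda>x. (deriv f x * g x - f x * deriv g x) / (g x * g x))"
  proof -
    have "smooth_upto n f" "smooth_upto n g"
      using Suc.prems smooth_upto_SucD by blast+
    moreover have "smooth_upto n (deriv f)" "smooth_upto n (deriv g)"
      using Suc.prems by (auto simp: smooth_upto_Suc)
    ultimately show ?thesis
      using Suc.prems(3) by (intro Suc.IH smooth_upto_diff smooth_upto_mult) auto
  qed
  ultimately show ?case
    using Suc.prems df dg by (simp add: smooth_upto_Suc differentiable_divide)
qed

lemma differentiable_affine_compose:
  fixes f :: "real \<Rightarrow> real"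
  assumes "\<forall>x. f differentiable (at x)"
  shows "(\<lambda>x. e * f (c * x + b)) differentiable (at y)"
proof -
  have "((\<lambda>x. e * f (c * x + b)) has_real_derivative e * (deriv f (c * y + b) * c)) (at y)"
    by (rule DERIV_cmult, rule DERIV_chain2[OF DERIV_deriv_everywhere[OF assms]])
       (auto intro!: derivative_eq_intros)
  then show ?thesis unfolding real_differentiable_def by blast
qed

lemma smooth_upto_affine_compose: "smooth_upto n f \<Longrightarrow> smooth_upto n (\<lambda>x. e * f (c * x + b))"
proof (induction n arbitrary: f e)
  case 0
  then show ?case unfolding smooth_upto_0 using differentiable_affine_compose by blast
next
  case (Suc n)
  have df: "\<forall>x. f differentiable (at x)" using Suc.prems smooth_upto_imp_differentiable by blast
  have "deriv (\<lambda>x. e * f (c * x + b)) = (\<lambda>x. (e * c) * deriv f (c * x + b))"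
    by (rule ext, rule DERIV_imp_deriv)
       (rule derivative_eq_intros DERIV_chain2[OF DERIV_deriv_everywhere[OF df]] | simp)+
  then show ?case
    using Suc df differentiable_affine_compose by (auto simp: smooth_upto_Suc)
qed

section \<open>A flat function and a smooth step\<close>

definition flat :: "real poly \<Rightarrow> real \<Rightarrow> real" where
  "flat q t = (if t > 0 then poly q (1/t) * exp (-1/t) else 0)"

text \<open>\<open>d/dt (q(1/t) e^(-1/t)) = (1/t)^2 (q(1/t) - q'(1/t)) e^(-1/t)\<close>, so the derivative
  of \<open>flat q\<close> is \<open>flat (flat_dpoly q)\<close>.\<close>
definition flat_dpoly :: "real poly \<Rightarrow> real poly" where
  "flat_dpoly q = [:0, 0, 1:] * (q - pderiv q)"

lemma poly_times_exp_minus_tendsto_0: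
  fixes p :: "real poly"
  shows "((\<lambda>s. poly p s * exp (-s)) \<longlongrightarrow> 0) at_top"
proof -
  have "((\<lambda>s. \<Sum>i\<le>degree p. coeff p i * (s ^ i / exp s))
      \<longlongrightarrow> (\<Sum>i\<le>degree p. coeff p i * 0)) at_top"
    by (intro tendsto_sum tendsto_mult tendsto_const tendsto_power_div_exp_0)
  moreover have "poly p s * exp (-s) = (\<Sum>i\<le>degree p. coeff p i * (s ^ i / exp s))" for s
    by (simp add: poly_altdef sum_distrib_right exp_minus divide_inverse mult.assoc)
  ultimately show ?thesis by simp
qed

lemma poly_inverse_times_exp_tendsto_0:
  fixes p :: "real poly"
  shows "((\<lambda>t. poly p (1/t) * exp (-1/t)) \<longlongrightarrow> 0) (at_right 0)"
proof -
  have "((\<lambda>t. poly p (inverse t) * exp (- inverse t)) \<longlongrightarrow> 0) (at_right 0)"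
    using filterlim_compose[OF poly_times_exp_minus_tendsto_0 filterlim_inverse_at_top_right]
    by (simp add: o_def)
  then show ?thesis by (simp add: divide_inverse)
qed

lemma flat_has_derivative_pos:
  assumes t: "t > 0"
  shows "(flat q has_real_derivative flat (flat_dpoly q) t) (at t)"
proof -
  have inv: "((\<lambda>x. 1/x) has_real_derivative - 1 / t^2) (at t)"
    using t DERIV_inverse[of t] by (simp add: divide_inverse power2_eq_square)
  have poly_part: "((\<lambda>x. poly q (1/x)) has_real_derivative poly (pderiv q) (1/t) * (- 1 / t^2)) (at t)"
    by (rule DERIV_chain2[OF poly_DERIV inv])
  have exp_part: "((\<lambda>x. exp (-1/x)) has_real_derivative exp (-1/t) * (1/t^2)) (at t)"
    using DERIV_chain2[OF DERIV_exp DERIV_minus[OF inv]] by simp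
  have "((\<lambda>x. poly q (1/x) * exp (-1/x)) has_real_derivative
      poly (pderiv q) (1/t) * (- 1 / t^2) * exp (-1/t) + poly q (1/t) * (exp (-1/t) * (1/t^2))) (at t)"
    using DERIV_mult[OF poly_part exp_part] by (simp add: algebra_simps)
  moreover have "poly (pderiv q) (1/t) * (- 1 / t^2) * exp (-1/t) + poly q (1/t) * (exp (-1/t) * (1/t^2))
      = flat (flat_dpoly q) t"
    using t by (simp add: flat_def flat_dpoly_def algebra_simps power2_eq_square)
  ultimately have "((\<lambda>x. poly q (1/x) * exp (-1/x)) has_real_derivative flat (flat_dpoly q) t) (at t)"
    by simp
  then show ?thesis
    by (rule has_field_derivative_transform_within_open[of _ _ _ "{0<..}"])
       (use t in \<open>simp_all add: flat_def\<close>)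
qed

lemma flat_has_derivative_0: "(flat q has_real_derivative flat (flat_dpoly q) 0) (at 0)"
proof -
  have "((\<lambda>y. (flat q y - flat q 0) / (y - 0)) \<longlongrightarrow> 0) (at 0)"
    unfolding filterlim_at_split
  proof
    show "((\<lambda>y. (flat q y - flat q 0) / (y - 0)) \<longlongrightarrow> 0) (at_left 0)"
      by (rule tendsto_eventually)
         (auto simp: flat_def eventually_at_left_field intro: exI[of _ "-1"])
    have "eventually (\<lambda>y. poly ([:0,1:] * q) (1/y) * exp (-1/y) = (flat q y - flat q 0) / (y - 0))
        (at_right 0)"
      by (auto simp: flat_def eventually_at_right_field intro!: exI[of _ 1])
    with poly_inverse_times_exp_tendsto_0
    show "((\<lambda>y. (flat q y - flat q 0) / (y - 0)) \<longlongrightarrow> 0) (at_right 0)"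
      by (rule Lim_transform_eventually)
  qed
  then show ?thesis by (simp add: has_field_derivative_iff flat_def)
qed

lemma flat_has_derivative: "(flat q has_real_derivative flat (flat_dpoly q) t) (at t)"
proof -
  consider "t > 0" | "t = 0" | "t < 0" by linarith
  then show ?thesis
  proof cases
    case 3
    have "((\<lambda>x. 0) has_real_derivative flat (flat_dpoly q) t) (at t)"
      using 3 by (simp add: flat_def)
    then show ?thesis
      by (rule has_field_derivative_transform_within_open[of _ _ _ "{..<0}"])
         (use 3 in \<open>simp_all add: flat_def\<close>)
  qed (use flat_has_derivative_pos flat_has_derivative_0 in auto)
qed

lemma deriv_flat: "deriv (flat q) = flat (flat_dpoly q)"
  by (rule ext, rule DERIV_imp_deriv, rule flat_has_derivative)

lemma smooth_upto_flat: "smooth_upto n (flat q)"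
proof (induction n arbitrary: q)
  case 0 then show ?case
    using flat_has_derivative by (auto simp: smooth_upto_0 real_differentiable_def)
next
  case (Suc n) then show ?case
    using flat_has_derivative by (auto simp: smooth_upto_Suc deriv_flat real_differentiable_def)
qed

definition smooth_step :: "real \<Rightarrow> real" where
  "smooth_step t = flat 1 t / (flat 1 t + flat 1 (1 - t))"

lemma flat_1_eq: "flat 1 t = (if t > 0 then exp (-1/t) else 0)"
  by (simp add: flat_def)

lemma flat_1_pos: "t > 0 \<Longrightarrow> flat 1 t > 0"
  by (simp add: flat_1_eq)

lemma flat_1_eq_0: "t \<le> 0 \<Longrightarrow> flat 1 t = 0"
  by (simp add: flat_1_eq)

lemma flat_1_nonneg: "flat 1 t \<ge> 0"
  by (simp add: flat_1_eq)

lemma deriv_flat_1_nonneg: "flat (flat_dpoly 1) t \<ge> 0"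
proof -
  have "poly (flat_dpoly 1) s = s\<^sup>2" for s
    by (simp add: flat_dpoly_def power2_eq_square)
  then show ?thesis by (simp add: flat_def)
qed

lemma smooth_step_denominator_pos: "flat 1 t + flat 1 (1 - t) > 0"
proof (cases "t > 0")
  case True then show ?thesis using flat_1_pos[of t] flat_1_nonneg[of "1 - t"] by simp
next
  case False then show ?thesis using flat_1_pos[of "1 - t"] flat_1_nonneg[of t] by simp
qed

lemma smooth_upto_smooth_step: "smooth_upto n smooth_step"
proof -
  have "smooth_upto n (\<lambda>x. 1 * flat 1 ((-1) * x + 1))"
    by (rule smooth_upto_affine_compose[OF smooth_upto_flat])
  then have "smooth_upto n (\<lambda>x. flat 1 x / (flat 1 x + 1 * flat 1 ((-1) * x + 1)))"
    by (rule smooth_upto_divide[OF smooth_upto_flat smooth_upto_add[OF smooth_upto_flat]])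
       (use smooth_step_denominator_pos in \<open>simp, metis less_irrefl\<close>)
  then show ?thesis by (simp add: smooth_step_def[abs_def])
qed

lemma smooth_step_has_derivative:
  "(smooth_step has_real_derivative
     (flat (flat_dpoly 1) t * flat 1 (1 - t) + flat 1 t * flat (flat_dpoly 1) (1 - t))
       / (flat 1 t + flat 1 (1 - t))^2) (at t)"
proof -
  have reflected: "((\<lambda>x. flat 1 (1 - x)) has_real_derivative flat (flat_dpoly 1) (1 - t) * (-1)) (at t)"
    by (rule DERIV_chain2[OF flat_has_derivative]) (auto intro!: derivative_eq_intros)
  have "((\<lambda>x. flat 1 x / (flat 1 x + flat 1 (1 - x))) has_real_derivative
      (flat (flat_dpoly 1) t * (flat 1 t + flat 1 (1 - t))
        - flat 1 t * (flat (flat_dpoly 1) t + flat (flat_dpoly 1) (1 - t) * (-1)))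
      / (flat 1 t + flat 1 (1 - t))^2) (at t)"
    using DERIV_divide[OF flat_has_derivative DERIV_add[OF flat_has_derivative reflected]]
      smooth_step_denominator_pos[of t]
    by (simp add: power2_eq_square)
  then show ?thesis
    by (simp add: smooth_step_def[abs_def] algebra_simps)
qed

lemma deriv_smooth_step_nonneg: "deriv smooth_step t \<ge> 0"
  using DERIV_imp_deriv[OF smooth_step_has_derivative[of t]] deriv_flat_1_nonneg flat_1_nonneg
  by (simp add: zero_le_divide_iff)

lemma DERIV_smooth_step: "(smooth_step has_real_derivative deriv smooth_step t) (at t)"
  using smooth_step_has_derivative DERIV_imp_deriv by metis

lemma smooth_step_mono: "s \<le> t \<Longrightarrow> smooth_step s \<le> smooth_step t"
  by (rule DERIV_nonneg_imp_nondecreasing[of s t smooth_step])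
     (use DERIV_smooth_step deriv_smooth_step_nonneg in blast)+

lemma smooth_step_eq_0: "t \<le> 0 \<Longrightarrow> smooth_step t = 0"
  by (simp add: smooth_step_def flat_1_eq_0)

lemma smooth_step_eq_1: "t \<ge> 1 \<Longrightarrow> smooth_step t = 1"
  using flat_1_pos[of t] by (simp add: smooth_step_def flat_1_eq_0)

lemma smooth_step_nonneg: "smooth_step t \<ge> 0"
  using smooth_step_mono[of 0 t] smooth_step_eq_0 smooth_step_mono[of t 0] by (cases "t \<le> 0") auto

lemma smooth_step_le_1: "smooth_step t \<le> 1"
  using smooth_step_mono[of t 1] smooth_step_eq_1 smooth_step_mono[of 1 t] by (cases "t \<le> 1") auto

lemma deriv_smooth_step_eq_0: "t < 0 \<or> t > 1 \<Longrightarrow> deriv smooth_step t = 0"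
proof (elim disjE)
  assume t: "t < 0"
  have "(smooth_step has_real_derivative 0) (at t)"
    by (rule has_field_derivative_transform_within_open[of "\<lambda>x. 0" _ _ "{..<0}"])
       (use t smooth_step_eq_0 in simp_all)
  then show ?thesis by (rule DERIV_imp_deriv)
next
  assume t: "t > 1"
  have "(smooth_step has_real_derivative 0) (at t)"
    by (rule has_field_derivative_transform_within_open[of "\<lambda>x. 1" _ _ "{1<..}"])
       (use t smooth_step_eq_1 in simp_all)
  then show ?thesis by (rule DERIV_imp_deriv)
qed

lemma continuous_on_deriv_smooth_step: "continuous_on UNIV (deriv smooth_step)"
proof -
  have "\<forall>x. deriv smooth_step differentiable (at x)"
    using smooth_upto_smooth_step[of 1] by (simp add: smooth_upto_Suc smooth_upto_0)
  then show ?thesis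
    by (meson continuous_at_imp_continuous_on differentiable_imp_continuous_within)
qed

section \<open>Smoothed indicators of intervals\<close>

definition smooth_indicator :: "real \<Rightarrow> real \<Rightarrow> real \<Rightarrow> real \<Rightarrow> real" where
  "smooth_indicator c d e t = smooth_step ((t - c) / e) - smooth_step ((t - d) / e)"

definition bump :: "real \<Rightarrow> real \<Rightarrow> real \<Rightarrow> real" where
  "bump c e t = deriv smooth_step ((t - c) / e) / e"

lemma smooth_upto_shifted_step: "e > 0 \<Longrightarrow> smooth_upto n (\<lambda>t. smooth_step ((t - c) / e))"
proof -
  assume e: "e > 0"
  have "smooth_upto n (\<lambda>t. 1 * smooth_step ((1/e) * t + (- c / e)))"
    by (rule smooth_upto_affine_compose[OF smooth_upto_smooth_step])
  moreover have "(\<lambda>t. 1 * smooth_step ((1/e) * t + (- c / e))) = (\<lambda>t. smooth_step ((t - c) / e))"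
    by (rule ext) (simp add: diff_divide_distrib)
  ultimately show ?thesis by simp
qed

lemma smooth_upto_smooth_indicator: "e > 0 \<Longrightarrow> smooth_upto n (smooth_indicator c d e)"
proof -
  assume e: "e > 0"
  have "smooth_upto n (\<lambda>t. smooth_step ((t - c) / e) - smooth_step ((t - d) / e))"
    by (rule smooth_upto_diff[OF smooth_upto_shifted_step[OF e] smooth_upto_shifted_step[OF e]])
  then show ?thesis by (simp add: smooth_indicator_def[abs_def])
qed

lemma smooth_step_scaled_eq:
  assumes h: "h > 0" and "t \<le> c \<or> h \<le> t - c"
  shows "smooth_step ((t - c) / h) = (if t \<le> c then 0 else 1)"
proof (cases "t \<le> c")
  case True
  then show ?thesis using h by (simp add: smooth_step_eq_0 divide_nonpos_pos)
next
  case False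
  then have "1 \<le> (t - c) / h" using assms by (simp add: field_simps)
  then show ?thesis using False by (simp add: smooth_step_eq_1)
qed

lemma test_fun_smooth_indicator:
  assumes "0 < c" "c \<le> d" "e > 0" "d + e < L"
  shows "test_fun L (smooth_indicator c d e)"
proof -
  have "\<forall>n x. (deriv ^^ n) (smooth_indicator c d e) differentiable at x"
    using smooth_upto_smooth_indicator[OF assms(3), of _ c d] unfolding smooth_upto_def by auto
  moreover have "smooth_indicator c d e x = 0" if "x \<notin> {c..d+e}" for x
    using that assms smooth_step_scaled_eq[of e x c] smooth_step_scaled_eq[of e x d]
    by (auto simp: smooth_indicator_def)
  ultimately show ?thesis unfolding test_fun_def
    using assms by (intro conjI exI[of _ c] exI[of _ "d + e"]) auto
qed

lemma shifted_step_has_derivative: "e > 0 \<Longrightarrow> ((\<lambda>t. smooth_step ((t - c) / e)) has_real_derivative bump c e t) (at t)"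
proof -
  assume e: "e > 0"
  have "((\<lambda>t. (t-c)/e) has_real_derivative 1/e) (at t)" using e by (auto intro!: derivative_eq_intros)
  from DERIV_chain2[OF DERIV_smooth_step this] show ?thesis unfolding bump_def by simp
qed

lemma deriv_smooth_indicator: "e > 0 \<Longrightarrow> deriv (smooth_indicator c d e) = (\<lambda>t. bump c e t - bump d e t)"
  unfolding smooth_indicator_def[abs_def]
  by (rule ext, rule DERIV_imp_deriv, rule DERIV_diff) (auto intro: shifted_step_has_derivative)

lemma bump_nonneg: "e > 0 \<Longrightarrow> bump c e t \<ge> 0"
  unfolding bump_def using deriv_smooth_step_nonneg by simp

lemma bump_eq_0: "e > 0 \<Longrightarrow> t \<notin> {c..c+e} \<Longrightarrow> bump c e t = 0"
proof -
  assume e: "e > 0" and t: "t \<notin> {c..c+e}"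
  then have "(t - c)/e < 0 \<or> (t - c)/e > 1"
    by (auto simp: field_simps)
  then show ?thesis unfolding bump_def using deriv_smooth_step_eq_0 by simp
qed

lemma isCont_bump: "e > 0 \<Longrightarrow> isCont (bump c e) t"
proof -
  assume e: "e > 0"
  have "continuous_on UNIV (\<lambda>x. deriv smooth_step ((x - c)/e) / e)"
    by (rule continuous_on_divide[OF continuous_on_compose2[OF continuous_on_deriv_smooth_step]])
       (use e in \<open>auto intro!: continuous_intros\<close>)
  then show ?thesis unfolding bump_def by (simp add: continuous_on_eq_continuous_at)
qed

lemma smooth_indicator_bounds:
  assumes "c \<le> d" "e > 0"
  shows "0 \<le> smooth_indicator c d e t" "smooth_indicator c d e t \<le> 1"
proof -
  have "(t - d) / e \<le> (t - c) / e" using assms by (simp add: divide_right_mono)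
  then show "0 \<le> smooth_indicator c d e t" "smooth_indicator c d e t \<le> 1"
    using smooth_step_mono[of "(t - d) / e" "(t - c) / e"] smooth_step_nonneg[of "(t - d) / e"]
      smooth_step_le_1[of "(t - c) / e"]
    by (simp_all add: smooth_indicator_def)
qed

lemma smooth_indicator_tendsto_indicator:
  assumes "c \<le> d" "e > 0"
  shows "(\<lambda>n. smooth_indicator c d (e / Suc n) t) \<longlonglongrightarrow> indicator {c<..d} t"
proof -
  have small: "eventually (\<lambda>n. t \<le> b \<or> e / Suc n \<le> t - b) sequentially" for b
  proof (cases "t \<le> b")
    case False
    have "(\<lambda>n. e / Suc n) \<longlonglongrightarrow> 0"
      using LIMSEQ_Suc[OF lim_const_over_n[of e]] by simp
    from order_tendstoD(2)[OF this, of "t - b"] False show ?thesis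
      by (auto elim: eventually_mono)
  qed simp
  have "eventually (\<lambda>n. smooth_indicator c d (e / Suc n) t = indicator {c<..d} t) sequentially"
    using small[of c] small[of d]
  proof eventually_elim
    case (elim n)
    have "e / Suc n > 0" using assms by simp
    then show ?case
      using smooth_step_scaled_eq[OF _ elim(1)] smooth_step_scaled_eq[OF _ elim(2)] assms(1)
      by (auto simp: smooth_indicator_def indicator_def)
  qed
  then show ?thesis by (rule tendsto_eventually)
qed

section \<open>Testing against bumps and smoothed indicators\<close>

lemma integral_lebesgue_on_compact_support:
  fixes f :: "real \<Rightarrow> real"
  assumes "0 < p" "p \<le> q" "q < L" "\<And>x. x \<notin> {p..q} \<Longrightarrow> f x = 0"
    and "\<And>x. p \<le> x \<Longrightarrow> x \<le> q \<Longrightarrow> isCont f x"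
  shows "integrable (lebesgue_on {0<..<L}) f"
    and "integral\<^sup>L (lebesgue_on {0<..<L}) f = integral\<^sup>L lborel (\<lambda>x. f x * indicator {p..q} x)"
proof -
  have I: "integrable lborel (\<lambda>x. f x * indicator {p..q} x)"
    by (rule borel_integrable_atLeastAtMost) (use assms in auto)
  have meas: "(\<lambda>x. f x * indicator {p..q} x) \<in> borel_measurable lborel"
    using I by (rule borel_measurable_integrable)
  have eq: "(\<lambda>x. indicator {0<..<L} x *\<^sub>R f x) = (\<lambda>x. f x * indicator {p..q} x)"
    using assms(1-4) by (auto simp: fun_eq_iff indicator_def)
  have S: "{0<..<L} \<inter> space lebesgue \<in> sets lebesgue" by simp
  show "integrable (lebesgue_on {0<..<L}) f"
    "integral\<^sup>L (lebesgue_on {0<..<L}) f = integral\<^sup>L lborel (\<lambda>x. f x * indicator {p..q} x)"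
    unfolding integrable_restrict_space[OF S] integral_restrict_space[OF S] eq
    using integrable_completion[OF meas] integral_completion[OF meas] I by simp_all
qed

lemma bump_integral:
  assumes "0 < c" "e > 0" "c + e < L"
  shows "integrable (lebesgue_on {0<..<L}) (bump c e)"
    and "integral\<^sup>L (lebesgue_on {0<..<L}) (bump c e) = 1"
proof -
  have support: "\<And>x. x \<notin> {c..c+e} \<Longrightarrow> bump c e x = 0" "\<And>x. isCont (bump c e) x"
    using assms bump_eq_0 isCont_bump by auto
  show "integrable (lebesgue_on {0<..<L}) (bump c e)"
    by (rule integral_lebesgue_on_compact_support(1)) (use assms support in auto)
  have "integral\<^sup>L lborel (\<lambda>x. indicator {c..c+e} x *\<^sub>R bump c e x)
      = smooth_step ((c + e - c) / e) - smooth_step ((c - c) / e)"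
  proof (rule integral_FTC_atLeastAtMost[where F="\<lambda>t. smooth_step ((t - c) / e)"])
    show "((\<lambda>t. smooth_step ((t - c) / e)) has_vector_derivative bump c e x) (at x within {c..c + e})"
      for x
      using shifted_step_has_derivative[OF assms(2), of c x]
      by (simp add: has_real_derivative_iff_has_vector_derivative has_vector_derivative_at_within)
    show "continuous_on {c..c + e} (bump c e)"
      using support by (simp add: continuous_at_imp_continuous_on)
  qed (use assms in simp)
  also have "\<dots> = 1" using assms by (simp add: smooth_step_eq_0 smooth_step_eq_1)
  finally show "integral\<^sup>L (lebesgue_on {0<..<L}) (bump c e) = 1"
    using integral_lebesgue_on_compact_support(2)[of c "c + e" L "bump c e"] assms support
    by (simp add: mult.commute)
qed

lemma integrable_mult_bump:
  assumes c: "0 < c" and e: "e > 0" "c + e < L" and w: "continuous_on {0..L} w"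
  shows "integrable (lebesgue_on {0<..<L}) (\<lambda>t. w t * bump c e t)"
proof (rule integral_lebesgue_on_compact_support(1)[where p=c and q="c+e"])
  have "isCont w t" if "0 < t" "t < L" for t
    using continuous_on_interior[OF w, of t] that by simp
  then show "isCont (\<lambda>t. w t * bump c e t) x" if "c \<le> x" "x \<le> c + e" for x
    using that c e isCont_bump[OF e(1)] by (auto intro!: continuous_intros)
qed (use c e bump_eq_0[OF e(1)] in auto)

lemma integral_mult_bump_near:
  assumes c: "0 < c" and e: "e > 0" "c + e < L" and w: "continuous_on {0..L} w"
    and near: "\<And>t. t \<in> {c..c+e} \<Longrightarrow> \<bar>w t - w c\<bar> \<le> r"
  shows "\<bar>integral\<^sup>L (lebesgue_on {0<..<L}) (\<lambda>t. w t * bump c e t) - w c\<bar> \<le> r"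
proof -
  let ?M = "lebesgue_on {0<..<L}"
  have I: "integrable ?M (\<lambda>t. w t * bump c e t)"
    using integrable_mult_bump[OF c e w] .
  have R: "integrable ?M (bump c e)" "integral\<^sup>L ?M (bump c e) = 1"
    using bump_integral[OF c e] by simp_all
  have "integral\<^sup>L ?M (\<lambda>t. w t * bump c e t) - w c
      = integral\<^sup>L ?M (\<lambda>t. w t * bump c e t) - integral\<^sup>L ?M (\<lambda>t. w c * bump c e t)"
    using R by simp
  also have "\<dots> = integral\<^sup>L ?M (\<lambda>t. (w t - w c) * bump c e t)"
    using I R(1) by (simp add: left_diff_distrib Bochner_Integration.integral_diff[symmetric])
  finally have "\<bar>integral\<^sup>L ?M (\<lambda>t. w t * bump c e t) - w c\<bar>
      = norm (integral\<^sup>L ?M (\<lambda>t. (w t - w c) * bump c e t))" by simp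
  also have "\<dots> \<le> integral\<^sup>L ?M (\<lambda>t. norm ((w t - w c) * bump c e t))"
    by (rule integral_norm_bound)
  also have "\<dots> \<le> integral\<^sup>L ?M (\<lambda>t. r * bump c e t)"
  proof (rule integral_mono)
    show "integrable ?M (\<lambda>t. norm ((w t - w c) * bump c e t))"
      using I R(1) by (simp add: left_diff_distrib)
    show "integrable ?M (\<lambda>t. r * bump c e t)"
      using R(1) by simp
    show "norm ((w t - w c) * bump c e t) \<le> r * bump c e t" for t
    proof (cases "t \<in> {c..c+e}")
      case True
      then show ?thesis
        using near[OF True] bump_nonneg[OF e(1), of c t] by (simp add: abs_mult mult_right_mono)
    next
      case False
      then show ?thesis using bump_eq_0[OF e(1)] by simp
    qed
  qed
  also have "\<dots> = r" using R by simp
  finally show ?thesis .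
qed

lemma integral_mult_bump_tendsto:
  assumes c: "0 < c" and e: "e > 0" "c + e < L" and w: "continuous_on {0..L} w"
  shows "(\<lambda>n. integral\<^sup>L (lebesgue_on {0<..<L}) (\<lambda>t. w t * bump c (e / Suc n) t)) \<longlonglongrightarrow> w c"
proof (rule LIMSEQ_I)
  fix r :: real assume r: "r > 0"
  have "isCont w c"
    using continuous_on_interior[OF w, of c] c e by simp
  then obtain \<eta> where \<eta>: "\<eta> > 0" "\<And>t. \<bar>t - c\<bar> < \<eta> \<Longrightarrow> \<bar>w t - w c\<bar> < r/2"
    unfolding isCont_def LIM_eq using r
    by (metis abs_zero cancel_comm_monoid_add_class.diff_cancel divide_pos_pos real_norm_def zero_less_numeral)
  obtain n0 :: nat where n0: "e / \<eta> < n0" using reals_Archimedean2 by blast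
  have close: "\<bar>integral\<^sup>L (lebesgue_on {0<..<L}) (\<lambda>t. w t * bump c (e / Suc n) t) - w c\<bar> \<le> r/2"
    if n: "n0 \<le> n" for n
  proof (rule integral_mult_bump_near[OF c _ _ w])
    have "e / \<eta> < Suc n" using n0 n by linarith
    then have "e / Suc n < \<eta>" using \<eta>(1) e by (simp add: field_simps)
    then show "\<bar>w t - w c\<bar> \<le> r/2" if "t \<in> {c..c + e / Suc n}" for t
      using \<eta>(2)[of t] that by fastforce
    have "e / Suc n \<le> e" using e by (simp add: field_simps)
    then show "e / Suc n > 0" "c + e / Suc n < L" using e by auto
  qed
  have "norm (integral\<^sup>L (lebesgue_on {0<..<L}) (\<lambda>t. w t * bump c (e / Suc n) t) - w c) < r"
    if "n0 \<le> n" for n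
    unfolding real_norm_def using close[OF that] r by linarith
  then show "\<exists>n0. \<forall>n\<ge>n0.
      norm (integral\<^sup>L (lebesgue_on {0<..<L}) (\<lambda>t. w t * bump c (e / Suc n) t) - w c) < r"
    by blast
qed

lemma L2_on_imp_integrable: "L2_on L f \<Longrightarrow> integrable (lebesgue_on {0<..<L}) f"
  using finite_measure.square_integrable_imp_integrable[OF finite_measure_lebesgue_on]
  unfolding L2_on_def by auto

lemma continuous_on_smooth_indicator: "e > 0 \<Longrightarrow> continuous_on UNIV (smooth_indicator c d e)"
proof -
  assume e: "e > 0"
  have "\<forall>x. smooth_indicator c d e differentiable (at x)"
    using smooth_upto_smooth_indicator[OF e, of 0 c d] by (simp add: smooth_upto_0)
  then show ?thesis by (meson continuous_at_imp_continuous_on differentiable_imp_continuous_within)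
qed

lemma integral_mult_smooth_indicator_tendsto:
  assumes h: "integrable (lebesgue_on {0<..<L}) h" and cd: "c \<le> d" and e: "e > 0"
  shows "(\<lambda>n. integral\<^sup>L (lebesgue_on {0<..<L}) (\<lambda>t. h t * smooth_indicator c d (e / Suc n) t))
     \<longlonglongrightarrow> integral\<^sup>L (lebesgue_on {0<..<L}) (\<lambda>t. h t * indicator {c<..d} t)"
proof (rule integral_dominated_convergence[where w="\<lambda>x. norm (h x)"])
  have hm: "h \<in> borel_measurable (lebesgue_on {0<..<L})" using h by (rule borel_measurable_integrable)
  have im: "(\<lambda>t. indicator {c<..d} t :: real) \<in> borel_measurable (lebesgue_on {0<..<L})"
    by (rule measurable_restrict_space1) (auto intro: measurable_completion)
  show "(\<lambda>t. h t * indicator {c<..d} t) \<in> borel_measurable (lebesgue_on {0<..<L})"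
    using hm im by (rule borel_measurable_times)
  show "(\<lambda>t. h t * smooth_indicator c d (e / Suc n) t) \<in> borel_measurable (lebesgue_on {0<..<L})" for n
  proof -
    have "smooth_indicator c d (e / Suc n) \<in> borel_measurable (lebesgue_on {0<..<L})"
      by (rule continuous_imp_measurable_on_sets_lebesgue)
         (use continuous_on_smooth_indicator[of "e / Suc n" c d] e in \<open>auto intro: continuous_on_subset\<close>)
    then show ?thesis using hm by (intro borel_measurable_times)
  qed
  show "integrable (lebesgue_on {0<..<L}) (\<lambda>x. norm (h x))" using h by (rule integrable_norm)
  show "AE x in lebesgue_on {0<..<L}.
      (\<lambda>n. h x * smooth_indicator c d (e / Suc n) x) \<longlonglongrightarrow> h x * indicator {c<..d} x"
    by (intro AE_I2 tendsto_mult tendsto_const smooth_indicator_tendsto_indicator cd e)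
  show "AE x in lebesgue_on {0<..<L}. norm (h x * smooth_indicator c d (e / Suc n) x) \<le> norm (h x)" for n
  proof (intro AE_I2)
    fix x
    have "e / Suc n > 0" using e by simp
    then have "0 \<le> smooth_indicator c d (e / Suc n) x" "smooth_indicator c d (e / Suc n) x \<le> 1"
      using smooth_indicator_bounds[OF cd] by blast+
    then show "norm (h x * smooth_indicator c d (e / Suc n) x) \<le> norm (h x)"
      by (simp add: abs_mult mult_left_le)
  qed
qed

lemma test_fun_smooth_indicator_shrinking:
  assumes "0 < c" "c \<le> d" "d < L"
  shows "test_fun L (smooth_indicator c d ((L - d) / 2 / Suc n))"
proof -
  define e where "e = (L - d) / 2"
  have "e > 0" "d + e < L" using assms unfolding e_def by (auto simp: field_simps)
  moreover have "e / Suc n \<le> e" "e / Suc n > 0" using \<open>e > 0\<close> by (simp_all add: divide_le_eq)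
  ultimately show ?thesis
    unfolding e_def[symmetric] using assms by (intro test_fun_smooth_indicator) auto
qed

text \<open>Testing the weak derivative against \<open>smooth_indicator c d e\<close>, whose derivative is
  \<open>bump c e - bump d e\<close>, and letting \<open>e \<rightarrow> 0\<close>.\<close>
lemma H1_integral_deriv:
  assumes w: "H1_with_deriv L w w'" and cd: "0 < c" "c < d" "d < L"
  shows "w d - w c = integral\<^sup>L (lebesgue_on {0<..<L}) (\<lambda>t. w' t * indicator {c<..d} t)"
proof -
  define e where "e = (L - d) / 2"
  have e: "e > 0" "d + e < L" using cd unfolding e_def by (auto simp: field_simps)
  let ?M = "lebesgue_on {0<..<L}"
  have wc: "continuous_on {0..L} w" and w'i: "integrable ?M w'" and wd: "weak_deriv_on L w w'"
    using w L2_on_imp_integrable[of L w'] unfolding H1_with_deriv_def by blast+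
  have seq: "integral\<^sup>L ?M (\<lambda>t. w t * bump c (e / Suc n) t) - integral\<^sup>L ?M (\<lambda>t. w t * bump d (e / Suc n) t)
      = - integral\<^sup>L ?M (\<lambda>t. w' t * smooth_indicator c d (e / Suc n) t)" for n
  proof -
    let ?e = "e / Suc n"
    have e': "?e > 0" "?e \<le> e" using e by (simp_all add: divide_le_eq)
    have i1: "integrable ?M (\<lambda>t. w t * bump c ?e t)" "integrable ?M (\<lambda>t. w t * bump d ?e t)"
      using cd e e' by (intro integrable_mult_bump wc; linarith)+
    have "integral\<^sup>L ?M (\<lambda>t. w t * deriv (smooth_indicator c d ?e) t)
        = - integral\<^sup>L ?M (\<lambda>t. w' t * smooth_indicator c d ?e t)"
      using wd test_fun_smooth_indicator_shrinking[of c d L n] cd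
      unfolding weak_deriv_on_def e_def by simp
    moreover have "integral\<^sup>L ?M (\<lambda>t. w t * deriv (smooth_indicator c d ?e) t)
       = integral\<^sup>L ?M (\<lambda>t. w t * bump c ?e t) - integral\<^sup>L ?M (\<lambda>t. w t * bump d ?e t)"
      unfolding deriv_smooth_indicator[OF e'(1)] right_diff_distrib
      using Bochner_Integration.integral_diff[OF i1] by simp
    ultimately show ?thesis by simp
  qed
  have "(\<lambda>n. integral\<^sup>L ?M (\<lambda>t. w t * bump c (e / Suc n) t)
        - integral\<^sup>L ?M (\<lambda>t. w t * bump d (e / Suc n) t))
      \<longlonglongrightarrow> w c - w d"
    by (intro tendsto_diff integral_mult_bump_tendsto) (use cd e wc in auto)
  moreover have "(\<lambda>n. - integral\<^sup>L ?M (\<lambda>t. w' t * smooth_indicator c d (e / Suc n) t))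
      \<longlonglongrightarrow> - integral\<^sup>L ?M (\<lambda>t. w' t * indicator {c<..d} t)"
    by (intro tendsto_minus integral_mult_smooth_indicator_tendsto w'i e) (use cd in auto)
  ultimately have "w c - w d = - integral\<^sup>L ?M (\<lambda>t. w' t * indicator {c<..d} t)"
    using LIMSEQ_unique seq by simp
  then show ?thesis by simp
qed

lemma distr_eq_on_integral_Ioc:
  assumes eq: "distr_eq_on L f g" and f: "integrable (lebesgue_on {0<..<L}) f"
    and g: "integrable (lebesgue_on {0<..<L}) g" and cd: "0 < c" "c \<le> d" "d < L"
  shows "integral\<^sup>L (lebesgue_on {0<..<L}) (\<lambda>t. f t * indicator {c<..d} t)
       = integral\<^sup>L (lebesgue_on {0<..<L}) (\<lambda>t. g t * indicator {c<..d} t)"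
proof -
  let ?M = "lebesgue_on {0<..<L}" and ?e = "\<lambda>n. (L - d) / 2 / Suc n"
  have "(\<lambda>n. integral\<^sup>L ?M (\<lambda>t. f t * smooth_indicator c d (?e n) t))
      \<longlonglongrightarrow> integral\<^sup>L ?M (\<lambda>t. f t * indicator {c<..d} t)"
    by (rule integral_mult_smooth_indicator_tendsto) (use f cd in auto)
  moreover have "(\<lambda>n. integral\<^sup>L ?M (\<lambda>t. g t * smooth_indicator c d (?e n) t))
      \<longlonglongrightarrow> integral\<^sup>L ?M (\<lambda>t. g t * indicator {c<..d} t)"
    by (rule integral_mult_smooth_indicator_tendsto) (use g cd in auto)
  moreover have "integral\<^sup>L ?M (\<lambda>t. f t * smooth_indicator c d (?e n) t)
      = integral\<^sup>L ?M (\<lambda>t. g t * smooth_indicator c d (?e n) t)" for n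
    using eq test_fun_smooth_indicator_shrinking[OF cd] unfolding distr_eq_on_def by blast
  ultimately show ?thesis using LIMSEQ_unique by simp
qed

section \<open>Functions with vanishing interval integrals\<close>

lemma emeasure_density_greaterThan:
  fixes P :: "real \<Rightarrow> real"
  assumes [measurable]: "P \<in> borel_measurable borel"
    and P: "integrable lborel (\<lambda>t. P t * indicator {x<..} t)" and P_nonneg: "\<And>t. P t \<ge> 0"
  shows "emeasure (density lborel (\<lambda>t. ennreal (P t))) {x<..}
    = ennreal (integral\<^sup>L lborel (\<lambda>t. P t * indicator {x<..} t))"
proof -
  have "emeasure (density lborel (\<lambda>t. ennreal (P t))) {x<..}
      = (\<integral>\<^sup>+ t. ennreal (P t * indicator {x<..} t) \<partial>lborel)"
    by (subst emeasure_density) (auto intro!: nn_integral_cong simp: indicator_def)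
  also have "\<dots> = ennreal (integral\<^sup>L lborel (\<lambda>t. P t * indicator {x<..} t))"
    by (rule nn_integral_eq_integral[OF P]) (auto simp: P_nonneg)
  finally show ?thesis .
qed

text \<open>The positive and negative parts of \<open>G\<close> define measures that agree on all rays
  \<open>{x<..}\<close>, hence coincide, hence have a.e. equal densities.\<close>
lemma AE_zero_if_tail_integrals_zero_lborel:
  fixes G :: "real \<Rightarrow> real"
  assumes G: "integrable lborel G" and tails: "\<And>x. integral\<^sup>L lborel (\<lambda>t. G t * indicator {x<..} t) = 0"
  shows "AE x in lborel. G x = 0"
proof -
  have [measurable]: "G \<in> borel_measurable lborel" using G by (rule borel_measurable_integrable)
  define P where "P x = max 0 (G x)" for x
  define N where "N x = max 0 (- G x)" for x
  have P_meas[measurable]: "P \<in> borel_measurable lborel"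
    unfolding P_def[abs_def] by measurable
  have N_meas[measurable]: "N \<in> borel_measurable lborel"
    unfolding N_def[abs_def] by measurable
  have P: "integrable lborel (\<lambda>t. P t * indicator {x<..} t)" for x
    by (rule Bochner_Integration.integrable_bound[OF G]) (auto simp: P_def indicator_def)
  have N: "integrable lborel (\<lambda>t. N t * indicator {x<..} t)" for x
    by (rule Bochner_Integration.integrable_bound[OF G]) (auto simp: N_def indicator_def)
  have PN: "integral\<^sup>L lborel (\<lambda>t. P t * indicator {x<..} t)
      = integral\<^sup>L lborel (\<lambda>t. N t * indicator {x<..} t)" for x
  proof -
    have "(\<lambda>t. G t * indicator {x<..} t) = (\<lambda>t. P t * indicator {x<..} t - N t * indicator {x<..} t)"
      by (auto simp: fun_eq_iff P_def N_def indicator_def)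
    then show ?thesis
      using tails[of x] Bochner_Integration.integral_diff[OF P N] by simp
  qed
  have emeasure_eq: "emeasure (density lborel (\<lambda>t. ennreal (P t))) {x<..}
      = ennreal (integral\<^sup>L lborel (\<lambda>t. P t * indicator {x<..} t))"
    "emeasure (density lborel (\<lambda>t. ennreal (N t))) {x<..}
      = ennreal (integral\<^sup>L lborel (\<lambda>t. P t * indicator {x<..} t))" for x
    using emeasure_density_greaterThan[OF _ P, of x] emeasure_density_greaterThan[OF _ N, of x] PN[of x]
      P_meas N_meas
    by (simp_all add: P_def N_def)
  have "density lborel (\<lambda>t. ennreal (P t)) = density lborel (\<lambda>t. ennreal (N t))"
    by (rule measure_eqI_lessThan) (auto simp: emeasure_eq)
  then have "AE x in lborel. ennreal (P x) = ennreal (N x)"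
    by (intro sigma_finite_measure.density_unique[OF sigma_finite_lborel]) auto
  then show ?thesis
    by eventually_elim (auto simp: P_def N_def max_def split: if_splits)
qed

lemma AE_zero_if_tail_integrals_zero:
  fixes G :: "real \<Rightarrow> real"
  assumes Gi: "integrable lebesgue G" and tails: "\<And>x. integral\<^sup>L lebesgue (\<lambda>t. G t * indicator {x<..} t) = 0"
  shows "AE x in lebesgue. G x = 0"
proof -
  have G_meas: "G \<in> borel_measurable lebesgue" using Gi by (rule borel_measurable_integrable)
  then obtain G' where G'_meas: "G' \<in> borel_measurable lborel" and ae: "AE x in lborel. G x = G' x"
    using completion_ex_borel_measurable_real by blast
  have ae': "AE x in lebesgue. G x = G' x" using ae by (rule AE_completion)
  have "integrable lebesgue G'"
    by (rule integrable_cong_AE_imp[OF Gi]) (use ae' measurable_completion[OF G'_meas] in auto)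
  then have G'_int: "integrable lborel G'" using integrable_completion[OF G'_meas] by simp
  have "AE x in lborel. G' x = 0"
  proof (rule AE_zero_if_tail_integrals_zero_lborel[OF G'_int])
    fix x
    have m: "(\<lambda>t. G' t * indicator {x<..} t) \<in> borel_measurable lborel" using G'_meas by measurable
    have "integral\<^sup>L lborel (\<lambda>t. G' t * indicator {x<..} t)
        = integral\<^sup>L lebesgue (\<lambda>t. G' t * indicator {x<..} t)"
      using integral_completion[OF m] by simp
    also have "\<dots> = integral\<^sup>L lebesgue (\<lambda>t. G t * indicator {x<..} t)"
    proof (rule integral_cong_AE)
      show "(\<lambda>t. G' t * indicator {x<..} t) \<in> borel_measurable lebesgue"
        using measurable_completion[OF m] by simp
      have "(\<lambda>t. indicator {x<..} t :: real) \<in> borel_measurable lebesgue"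
        by (rule measurable_completion) simp
      then show "(\<lambda>t. G t * indicator {x<..} t) \<in> borel_measurable lebesgue"
        using G_meas by (rule borel_measurable_times[rotated])
      show "AE t in lebesgue. G' t * indicator {x<..} t = G t * indicator {x<..} t"
        using ae' by eventually_elim simp
    qed
    finally show "integral\<^sup>L lborel (\<lambda>t. G' t * indicator {x<..} t) = 0" using tails by simp
  qed
  then have "AE x in lebesgue. G' x = 0" by (rule AE_completion)
  with ae' show ?thesis by eventually_elim simp
qed

lemma integrable_mult_indicator_Ioc:
  fixes f :: "real \<Rightarrow> real"
  assumes "integrable (lebesgue_on {0<..<L}) f"
  shows "integrable (lebesgue_on {0<..<L}) (\<lambda>t. f t * indicator {c<..d} t)"
proof (rule Bochner_Integration.integrable_bound[OF assms])
  show "(\<lambda>t. f t * indicator {c<..d} t) \<in> borel_measurable (lebesgue_on {0<..<L})"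
  proof (rule borel_measurable_times)
    show "(\<lambda>t. indicator {c<..d} t :: real) \<in> borel_measurable (lebesgue_on {0<..<L})"
      by (rule measurable_restrict_space1) (auto intro: measurable_completion)
  qed (rule borel_measurable_integrable[OF assms])
  show "AE x in lebesgue_on {0<..<L}. norm (f x * indicator {c<..d} x) \<le> norm (f x)"
    by (intro AE_I2) (auto simp: indicator_def)
qed

lemma AE_zero_on_Ioc_if_interval_integrals_zero:
  fixes g :: "real \<Rightarrow> real"
  assumes g: "integrable (lebesgue_on {0<..<L}) g"
    and intervals: "\<And>c d. 0 < c \<Longrightarrow> c \<le> d \<Longrightarrow> d < L \<Longrightarrow>
      integral\<^sup>L (lebesgue_on {0<..<L}) (\<lambda>t. g t * indicator {c<..d} t) = 0"
    and pq: "0 < p" "p \<le> q" "q < L"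
  shows "AE x in lebesgue. x \<in> {p<..q} \<longrightarrow> g x = 0"
proof -
  have S: "{0<..<L} \<inter> space lebesgue \<in> sets lebesgue" by simp
  have g0: "integrable lebesgue (\<lambda>x. indicator {0<..<L} x *\<^sub>R g x)"
    using g by (subst (asm) integrable_restrict_space[OF S])
  define G where "G t = g t * indicator {p<..q} t" for t
  have GG: "G = (\<lambda>t. indicator {p<..q} t *\<^sub>R (indicator {0<..<L} t *\<^sub>R g t))"
    using pq by (auto simp: fun_eq_iff G_def indicator_def)
  have Gi: "integrable lebesgue G" unfolding GG
    by (rule integrable_mult_indicator[OF _ g0]) simp
  have "AE x in lebesgue. G x = 0"
  proof (rule AE_zero_if_tail_integrals_zero[OF Gi])
    fix x
    show "integral\<^sup>L lebesgue (\<lambda>t. G t * indicator {x<..} t) = 0"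
    proof (cases "max x p \<le> q")
      case True
      have eq: "(\<lambda>t. G t * indicator {x<..} t) = (\<lambda>t. indicator {0<..<L} t *\<^sub>R (g t * indicator {max x p<..q} t))"
        using pq by (auto simp: fun_eq_iff G_def indicator_def)
      have "integral\<^sup>L lebesgue (\<lambda>t. G t * indicator {x<..} t)
          = integral\<^sup>L (lebesgue_on {0<..<L}) (\<lambda>t. g t * indicator {max x p<..q} t)"
        unfolding eq integral_restrict_space[OF S] ..
      also have "\<dots> = 0" by (rule intervals) (use True pq in auto)
      finally show ?thesis .
    next
      case False
      then have "(\<lambda>t. G t * indicator {x<..} t) = (\<lambda>t. 0)"
        by (auto simp: fun_eq_iff G_def indicator_def)
      then show ?thesis by simp
    qed
  qed
  then show ?thesis by eventually_elim (auto simp: G_def indicator_def split: if_splits)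
qed

lemma AE_zero_if_interval_integrals_zero:
  fixes g :: "real \<Rightarrow> real"
  assumes g: "integrable (lebesgue_on {0<..<L}) g" and L: "L > 0"
    and intervals: "\<And>c d. 0 < c \<Longrightarrow> c \<le> d \<Longrightarrow> d < L \<Longrightarrow>
      integral\<^sup>L (lebesgue_on {0<..<L}) (\<lambda>t. g t * indicator {c<..d} t) = 0"
  shows "AE x in lebesgue. x \<in> {0<..<L} \<longrightarrow> g x = 0"
proof -
  define r where "r n = L / (real n + 2)" for n :: nat
  have "AE x in lebesgue. x \<in> {r n<..L - r n} \<longrightarrow> g x = 0" for n
  proof (rule AE_zero_on_Ioc_if_interval_integrals_zero[OF g intervals])
    have "r n \<le> L / 2" using L unfolding r_def by (intro divide_left_mono) auto
    moreover have "0 < r n" using L unfolding r_def by simp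
    ultimately show "0 < r n" "r n \<le> L - r n" "L - r n < L" by linarith+
  qed
  then have "AE x in lebesgue. \<forall>n. x \<in> {r n<..L - r n} \<longrightarrow> g x = 0"
    unfolding AE_all_countable by blast
  then show ?thesis
  proof eventually_elim
    case (elim x)
    show ?case
    proof
      assume x: "x \<in> {0<..<L}"
      define m where "m = min x (L - x)"
      have m: "m > 0" using x by (auto simp: m_def)
      obtain n :: nat where n: "L / m < n" using reals_Archimedean2 by blast
      have "L < n * m" using n m by (simp add: field_simps)
      also have "\<dots> \<le> (n + 2) * m" using m by (intro mult_right_mono) auto
      finally have "r n < m" unfolding r_def by (simp add: field_simps)
      then show "g x = 0" using elim unfolding m_def by auto
    qed
  qed
qed

section \<open>Linear growth of \<open>w\<close> near a zero\<close>

lemma integral_const_indicator_Ioc: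
  fixes c d L k :: real
  assumes "0 < c" "c \<le> d" "d < L"
  shows "integrable (lebesgue_on {0<..<L}) (\<lambda>t. k * indicator {c<..d} t)"
    and "integral\<^sup>L (lebesgue_on {0<..<L}) (\<lambda>t. k * indicator {c<..d} t) = k * (d - c)"
proof -
  have S: "{0<..<L} \<inter> space lebesgue \<in> sets lebesgue" by simp
  have eq: "(\<lambda>x. indicator {0<..<L} x *\<^sub>R (k * indicator {c<..d} x)) = (\<lambda>x. k * indicator {c<..d} x :: real)"
    using assms by (auto simp: fun_eq_iff indicator_def)
  have m: "(\<lambda>x. k * indicator {c<..d} x :: real) \<in> borel_measurable lborel" by measurable
  have "integrable lborel (indicator {c<..d} :: real \<Rightarrow> real)"
    using assms by (intro integrable_real_indicator) auto
  then have I: "integrable lborel (\<lambda>x. k * indicator {c<..d} x :: real)" by simp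
  have "measure lborel {c<..d} = d - c" using assms by (simp add: measure_def)
  then have V: "integral\<^sup>L lborel (\<lambda>x. k * indicator {c<..d} x :: real) = k * (d - c)" by simp
  show "integrable (lebesgue_on {0<..<L}) (\<lambda>t. k * indicator {c<..d} t)"
    "integral\<^sup>L (lebesgue_on {0<..<L}) (\<lambda>t. k * indicator {c<..d} t) = k * (d - c)"
    unfolding integrable_restrict_space[OF S] integral_restrict_space[OF S] eq
    using integrable_completion[OF m] integral_completion[OF m] I V by simp_all
qed

lemma continuous_on_mono_from_interior:
  fixes F :: "real \<Rightarrow> real"
  assumes cont: "continuous_on {lo..hi} F"
    and mono: "\<And>s t. lo < s \<Longrightarrow> s < t \<Longrightarrow> t < hi \<Longrightarrow> F s \<le> F t"
    and cd: "lo \<le> c" "c \<le> d" "d \<le> hi"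
  shows "F c \<le> F d"
proof (cases "c = d")
  case False
  then have "c < d" using cd by simp
  have "F c \<le> F t" if t: "c < t" "t < d" for t
  proof (rule continuous_le_on_closure[where S="{c<..<t}" and f=F and x=c])
    show "continuous_on (closure {c<..<t}) F"
      using t cd by (auto intro: continuous_on_subset[OF cont])
    show "F s \<le> F t" if "s \<in> {c<..<t}" for s
      using that t cd by (intro mono) auto
  qed (use t in simp)
  then show ?thesis
    using \<open>c < d\<close> cd
    by (intro continuous_ge_on_closure[where S="{c<..<d}" and f=F and x=d])
       (auto intro: continuous_on_subset[OF cont])
qed simp

lemma integrable_bounded_mult:
  fixes a g :: "'a \<Rightarrow> real"
  assumes g: "integrable M g" and a: "a \<in> borel_measurable M" and bound: "AE x in M. \<bar>a x\<bar> \<le> C"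
  shows "integrable M (\<lambda>x. a x * g x)"
proof (rule Bochner_Integration.integrable_bound)
  show "integrable M (\<lambda>x. C * g x)" using g by simp
  show "(\<lambda>x. a x * g x) \<in> borel_measurable M"
    using a borel_measurable_integrable[OF g] by (rule borel_measurable_times)
  show "AE x in M. norm (a x * g x) \<le> norm (C * g x)"
    using bound
  proof eventually_elim
    case (elim x)
    then have "\<bar>a x\<bar> \<le> \<bar>C\<bar>" by linarith
    then show ?case by (simp add: abs_mult mult_right_mono)
  qed
qed

lemma distr_eq_on_imp_AE_eq:
  assumes L: "L > 0" and eq: "distr_eq_on L f g"
    and f: "integrable (lebesgue_on {0<..<L}) f" and g: "integrable (lebesgue_on {0<..<L}) g"
  shows "AE x in lebesgue. x \<in> {0<..<L} \<longrightarrow> f x = g x"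
proof -
  have "AE x in lebesgue. x \<in> {0<..<L} \<longrightarrow> f x - g x = 0"
  proof (rule AE_zero_if_interval_integrals_zero[OF Bochner_Integration.integrable_diff[OF f g] L])
    fix c d :: real assume cd: "0 < c" "c \<le> d" "d < L"
    have "(\<lambda>t. (f t - g t) * indicator {c<..d} t)
        = (\<lambda>t. f t * indicator {c<..d} t - g t * indicator {c<..d} t)"
      by (simp add: fun_eq_iff left_diff_distrib)
    then show "integral\<^sup>L (lebesgue_on {0<..<L}) (\<lambda>t. (f t - g t) * indicator {c<..d} t) = 0"
      using Bochner_Integration.integral_diff[OF integrable_mult_indicator_Ioc[OF f]
          integrable_mult_indicator_Ioc[OF g], of c d]
        distr_eq_on_integral_Ioc[OF eq f g cd]
      by simp
  qed
  then show ?thesis by eventually_elim simp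
qed

lemma AE_eq_if_distr_eq_mult_deriv:
  assumes L: "L > 0" and a: "a \<in> borel_measurable (lebesgue_on {0<..<L})"
    and a_bounds: "AE x in lebesgue. x \<in> {0<..<L} \<longrightarrow> \<alpha> \<le> a x \<and> a x \<le> \<beta>"
    and \<alpha>: "0 < \<alpha>"
    and w: "H1_with_deriv L w w'" and f: "integrable (lebesgue_on {0<..<L}) f"
    and eq: "distr_eq_on L (\<lambda>x. a x * w' x) f"
  shows "AE x in lebesgue. x \<in> {0<..<L} \<longrightarrow> a x * w' x = f x"
proof (rule distr_eq_on_imp_AE_eq[OF L eq _ f])
  have "AE x in lebesgue. x \<in> {0<..<L} \<longrightarrow> \<bar>a x\<bar> \<le> \<beta>"
    using a_bounds by eventually_elim (use \<alpha> in auto)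
  then have "AE x in lebesgue_on {0<..<L}. \<bar>a x\<bar> \<le> \<beta>"
    by (simp add: AE_restrict_space_iff)
  moreover have "integrable (lebesgue_on {0<..<L}) w'"
    using w L2_on_imp_integrable unfolding H1_with_deriv_def by auto
  ultimately show "integrable (lebesgue_on {0<..<L}) (\<lambda>x. a x * w' x)"
    using integrable_bounded_mult a by blast
qed

lemma H1_increment_ge:
  assumes w: "H1_with_deriv L w w'" and lo: "0 \<le> lo" and hi: "hi \<le> L"
    and w'_ge: "AE x in lebesgue. x \<in> {lo..hi} \<longrightarrow> k \<le> w' x"
    and cd: "lo \<le> c" "c \<le> d" "d \<le> hi"
  shows "k * (d - c) \<le> w d - w c"
proof -
  let ?M = "lebesgue_on {0<..<L}"
  define F where "F y = w y - k * y" for y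
  have "continuous_on {lo..hi} w"
    by (rule continuous_on_subset[of "{0..L}"]) (use w lo hi in \<open>auto simp: H1_with_deriv_def\<close>)
  then have "continuous_on {lo..hi} F"
    unfolding F_def[abs_def] by (intro continuous_intros)
  moreover have "F c' \<le> F d'" if cd': "lo < c'" "c' < d'" "d' < hi" for c' d'
  proof -
    have const: "integrable ?M (\<lambda>t. k * indicator {c'<..d'} t)"
      "integral\<^sup>L ?M (\<lambda>t. k * indicator {c'<..d'} t) = k * (d' - c')"
      using integral_const_indicator_Ioc[of c' d' L k] cd' lo hi by auto
    have "k * (d' - c') \<le> integral\<^sup>L ?M (\<lambda>t. w' t * indicator {c'<..d'} t)"
      unfolding const(2)[symmetric]
    proof (rule integral_mono_AE[OF const(1)])
      show "integrable ?M (\<lambda>t. w' t * indicator {c'<..d'} t)"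
        using w unfolding H1_with_deriv_def by (blast intro: integrable_mult_indicator_Ioc L2_on_imp_integrable)
      have "AE x in lebesgue. x \<in> {0<..<L} \<longrightarrow> x \<in> {lo..hi} \<longrightarrow> k \<le> w' x"
        using w'_ge by eventually_elim simp
      then have "AE x in ?M. x \<in> {lo..hi} \<longrightarrow> k \<le> w' x"
        by (simp add: AE_restrict_space_iff)
      then show "AE x in ?M. k * indicator {c'<..d'} x \<le> w' x * indicator {c'<..d'} x"
        by eventually_elim (use cd' in \<open>auto simp: indicator_def\<close>)
    qed
    also have "\<dots> = w d' - w c'"
      using H1_integral_deriv[OF w] cd' lo hi by simp
    finally show ?thesis unfolding F_def by (simp add: algebra_simps)
  qed
  ultimately have "F c \<le> F d"
    by (rule continuous_on_mono_from_interior) (use cd in auto)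
  then show ?thesis unfolding F_def by (simp add: algebra_simps)
qed

lemma AE_deriv_ge_near_zero:
  fixes \<phi> :: "real \<Rightarrow> ereal" and a l w w' :: "real \<Rightarrow> real"
  assumes phi_cont: "continuous_on UNIV \<phi>" and phi_not_minf: "\<And>s. \<phi> s \<noteq> -\<infinity>"
    and phi_0: "\<phi> 0 = \<infinity>"
    and phiw_fin: "AE x in lebesgue. x \<in> {0<..<L} \<longrightarrow> \<phi> (w x) \<noteq> \<infinity>"
    and equation: "AE x in lebesgue. x \<in> {0<..<L} \<longrightarrow> a x * w' x = real_of_ereal (\<phi> (w x)) + l x"
    and a_bounds: "AE x in lebesgue. x \<in> {0<..<L} \<longrightarrow> \<alpha> \<le> a x \<and> a x \<le> \<beta>"
    and \<alpha>: "0 < \<alpha>"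
    and l_lower: "AE x in lebesgue. x \<in> {A..B} \<longrightarrow> l x \<ge> - M"
    and w: "continuous_on {0..L} w" and AB: "0 \<le> A" "B \<le> L" and x0: "x0 \<in> {A..B}" "w x0 = 0"
    and k: "0 \<le> k"
  shows "\<exists>\<delta>>0. AE x in lebesgue. x \<in> {x0-\<delta>..x0+\<delta>} \<inter> {A..B} \<longrightarrow> k \<le> w' x"
proof -
  have "isCont \<phi> 0"
    using phi_cont by (simp add: continuous_on_eq_continuous_at)
  then have "(\<phi> \<longlongrightarrow> \<infinity>) (at 0)"
    using phi_0 by (simp add: isCont_def)
  then have "eventually (\<lambda>s. ereal (\<beta> * k + M) < \<phi> s) (at 0)"
    by (rule order_tendstoD(1)) simp
  then obtain \<eta> where
    \<eta>: "\<eta> > 0" "\<And>s. s \<noteq> 0 \<Longrightarrow> dist s 0 < \<eta> \<Longrightarrow> ereal (\<beta> * k + M) < \<phi> s"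
    unfolding eventually_at by blast
  have "x0 \<in> {0..L}" using x0 AB by auto
  then obtain \<delta> where
    \<delta>: "\<delta> > 0" "\<And>x. x \<in> {0..L} \<Longrightarrow> dist x x0 < \<delta> \<Longrightarrow> dist (w x) (w x0) < \<eta>"
    using w \<eta>(1) unfolding continuous_on_iff by metis
  have "AE x in lebesgue. x \<in> {x0-\<delta>/2..x0+\<delta>/2} \<inter> {A..B} \<longrightarrow> k \<le> w' x"
    using equation a_bounds phiw_fin l_lower
      AE_completion[OF AE_lborel_singleton[of 0]] AE_completion[OF AE_lborel_singleton[of L]]
  proof eventually_elim
    case (elim x)
    show ?case
    proof
      assume x: "x \<in> {x0-\<delta>/2..x0+\<delta>/2} \<inter> {A..B}"
      have x_in: "x \<in> {0<..<L}" using x elim(5,6) AB by auto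
      have "\<bar>w x\<bar> < \<eta>"
        using \<delta> x x_in x0(2) by (auto simp: dist_real_def)
      moreover obtain r where r: "\<phi> (w x) = ereal r"
        using elim(3) x_in phi_not_minf[of "w x"] by (cases "\<phi> (w x)") auto
      moreover have "w x \<noteq> 0" using r phi_0 by auto
      ultimately have "\<beta> * k + M < r" using \<eta>(2)[of "w x"] by (simp add: dist_real_def)
      moreover have "l x \<ge> - M" using elim(4) x by auto
      moreover have "a x * w' x = r + l x" using elim(1) x_in r by simp
      ultimately have big: "\<beta> * k < a x * w' x" by linarith
      have a: "\<alpha> \<le> a x" "a x \<le> \<beta>" using elim(2) x_in by auto
      show "k \<le> w' x"
      proof (rule ccontr)
        assume "\<not> k \<le> w' x"
        then have "a x * w' x < a x * k" using a \<alpha> by (intro mult_strict_left_mono) auto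
        also have "\<dots> \<le> \<beta> * k" using a k by (intro mult_right_mono) auto
        finally show False using big by simp
      qed
    qed
  qed
  then show ?thesis using \<delta>(1) by (intro exI[of _ "\<delta>/2"]) auto
qed

theorem mainTheorem5:
  fixes L \<alpha> \<beta> A B x0 M :: real
    and a l w w' :: "real \<Rightarrow> real"
    and \<phi> :: "real \<Rightarrow> ereal"
  assumes L_pos: "L > 0"
    and Ha_meas: "a \<in> borel_measurable (lebesgue_on {0<..<L})"
    and Ha_const: "0 < \<alpha>" "\<alpha> < \<beta>"
    and Ha_bounds: "AE x in lebesgue. x \<in> {0<..<L} \<longrightarrow> \<alpha> \<le> a x \<and> a x \<le> \<beta>"
    and l_L2: "L2_on L l"
    and phi_cont: "continuous_on UNIV \<phi>"
    and phi_not_minf: "\<And>s. \<phi> s \<noteq> -\<infinity>"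
    and phi_fin: "\<And>s. s \<noteq> 0 \<Longrightarrow> \<phi> s < \<infinity>"
    and phi_0: "\<phi> 0 = \<infinity>"
    and w_H1: "H1_with_deriv L w w'"
    and phiw_fin: "AE x in lebesgue. x \<in> {0<..<L} \<longrightarrow> \<phi> (w x) \<noteq> \<infinity>"
    and phiw_L2: "L2_on L (\<lambda>x. real_of_ereal (\<phi> (w x)))"
    and eq: "distr_eq_on L (\<lambda>x. a x * w' x) (\<lambda>x. real_of_ereal (\<phi> (w x)) + l x)"
    and AB: "0 \<le> A" "A < B" "B \<le> L"
    and x0: "x0 \<in> {A..B}" "w x0 = 0"
    and M: "M > 0" "AE x in lebesgue. x \<in> {A..B} \<longrightarrow> l x \<ge> - M"
  shows "\<forall>k>0. \<exists>\<delta>>0.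
           (AE x in lebesgue. x \<in> {x0-\<delta>..x0+\<delta>} \<inter> {A..B} \<longrightarrow> w' x \<ge> k) \<and>
           (\<forall>x \<in> {x0..x0+\<delta>} \<inter> {A..B}. w x \<ge> k * (x - x0)) \<and>
           (\<forall>x \<in> {x0-\<delta>..x0} \<inter> {A..B}. w x \<le> k * (x - x0))"
proof (intro allI impI)
  fix k :: real assume k: "k > 0"
  have "integrable (lebesgue_on {0<..<L}) (\<lambda>x. real_of_ereal (\<phi> (w x)) + l x)"
    using L2_on_imp_integrable[OF phiw_L2] L2_on_imp_integrable[OF l_L2]
    by (rule Bochner_Integration.integrable_add)
  then have equation:
    "AE x in lebesgue. x \<in> {0<..<L} \<longrightarrow> a x * w' x = real_of_ereal (\<phi> (w x)) + l x"
    using AE_eq_if_distr_eq_mult_deriv[OF L_pos Ha_meas Ha_bounds Ha_const(1) w_H1 _ eq] by blast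
  have w_cont: "continuous_on {0..L} w"
    using w_H1 unfolding H1_with_deriv_def by blast
  obtain \<delta> where \<delta>: "\<delta> > 0"
    and w'_ge: "AE x in lebesgue. x \<in> {x0-\<delta>..x0+\<delta>} \<inter> {A..B} \<longrightarrow> k \<le> w' x"
    using AE_deriv_ge_near_zero[OF phi_cont phi_not_minf phi_0 phiw_fin equation Ha_bounds
        Ha_const(1) M(2) w_cont AB(1,3) x0 less_imp_le[OF k]]
    by blast
  define lo hi where "lo = max (x0 - \<delta>) A" and "hi = min (x0 + \<delta>) B"
  have "AE x in lebesgue. x \<in> {lo..hi} \<longrightarrow> k \<le> w' x"
    using w'_ge by eventually_elim (auto simp: lo_def hi_def)
  then have increment: "k * (d - c) \<le> w d - w c" if "lo \<le> c" "c \<le> d" "d \<le> hi" for c d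
    using H1_increment_ge[OF w_H1 _ _ _ that] AB by (auto simp: lo_def hi_def)
  show "\<exists>\<delta>>0. (AE x in lebesgue. x \<in> {x0-\<delta>..x0+\<delta>} \<inter> {A..B} \<longrightarrow> w' x \<ge> k) \<and>
      (\<forall>x \<in> {x0..x0+\<delta>} \<inter> {A..B}. w x \<ge> k * (x - x0)) \<and>
      (\<forall>x \<in> {x0-\<delta>..x0} \<inter> {A..B}. w x \<le> k * (x - x0))"
  proof (intro exI[of _ \<delta>] conjI ballI \<delta> w'_ge)
    fix x assume "x \<in> {x0..x0+\<delta>} \<inter> {A..B}"
    then show "w x \<ge> k * (x - x0)" using increment[of x0 x] x0 by (auto simp: lo_def hi_def)
  next
    fix x assume "x \<in> {x0-\<delta>..x0} \<inter> {A..B}"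
    then show "w x \<le> k * (x - x0)"
      using increment[of x x0] x0 by (auto simp: lo_def hi_def algebra_simps)
  qed
qed

end
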